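(* Let $\mu,\nu$ be Borel probability measures on $\mathbb{R}^d$ such that: (a) there is a bounded connected open Lipschitz domain $\Omega\subset B(0,1)$ with $\mu(dx)=\rho_\mu(x)\mathbf 1_\Omega(x)dx$ and $0<\underline\lambda_\mu\le\rho_\mu\le\overline\lambda_\mu<\infty$ a.e. on $\Omega$; (b) $\nu\ll\mathrm{Leb}$, $\operatorname{spt}\nu\subseteq B(0,1)$, $d\nu/dy\le\overline\lambda_\nu<\infty$ on $\operatorname{spt}\nu$; (c) the Monge map $T=\nabla\varphi$ is $L$-Lipschitz. Let $C_{\mathrm{val}}$ be a constant with $C_{\mathrm{val}}^{-1}\varepsilon^{2/(2+d)}\le\Delta_\varepsilon\le C_{\mathrm{val}}\varepsilon^{2/(2+d)}$ for $\varepsilon\in(0,1]$, and $c_{\mathrm{sm}}=\big(2\overline\lambda_\nu(1+L^2)^{d/2}\omega_dC_{\mathrm{val}}\big)^{-1/d}$. Then for every $\varepsilon\in(0,1]$, $$\operatorname{dist}(\operatorname{spt}\pi_\varepsilon;\operatorname{gr}T)\ge c_{\mathrm{sm}}\varepsilon^{\frac{1}{d+2}}\quad\text{and hence}\quad\sup_{(x,y)\in\operatorname{spt}\pi_\varepsilon}\|y-T(x)\|\ge c_{\mathrm{sm}}\varepsilon^{\frac{1}{d+2}}.$$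
   Context: Cost $c(x,y)=\frac12\|x-y\|^2$, $P=\mu\otimes\nu$, $\mathrm{OT}(\mu,\nu)=\inf_{\pi\in\Pi(\mu,\nu)}\int c\,d\pi$; $T=\nabla\varphi$ ($\varphi$ convex) is the Brenier optimal map with $T_\#\mu=\nu$. For $\varepsilon>0$, $\mathrm{QOT}_\varepsilon(\mu,\nu)=\inf_{\pi\in\Pi(\mu,\nu),\pi\ll P}\{\int c\,d\pi+\frac\varepsilon2\|\frac{d\pi}{dP}\|^2_{L^2(P)}\}$, $\pi_\varepsilon$ its unique optimizer, $\Delta_\varepsilon=\mathrm{QOT}_\varepsilon-\mathrm{OT}$. $\operatorname{gr}T$ is the graph of $T$, $\operatorname{dist}(A;B)=\sup_{a\in A}\inf_{b\in B}\|a-b\|$ (Euclidean in $\mathbb{R}^{2d}$), $\omega_d$ the unit-ball volume. *)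

theory Defs
  imports "HOL-Analysis.Analysis" "HOL-Probability.Probability"
begin

definition qcost :: "'a::euclidean_space \<times> 'a \<Rightarrow> real" where
  "qcost z = (norm (fst z - snd z))^2 / 2"

definition couplings :: "'a measure \<Rightarrow> 'b measure \<Rightarrow> ('a \<times> 'b) measure set" where
  "couplings \<mu> \<nu> = {\<pi>. sets \<pi> = sets (\<mu> \<Otimes>\<^sub>M \<nu>) \<and> prob_space \<pi> \<and>
      distr \<pi> \<mu> fst = \<mu> \<and> distr \<pi> \<nu> snd = \<nu>}"

definition OT :: "'a::euclidean_space measure \<Rightarrow> 'a measure \<Rightarrow> ennreal" where
  "OT \<mu> \<nu> = (INF \<pi>\<in>couplings \<mu> \<nu>. \<integral>\<^sup>+ z. ennreal (qcost z) \<partial>\<pi>)"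

definition qot_obj :: "real \<Rightarrow> 'a::euclidean_space measure \<Rightarrow> 'a measure \<Rightarrow> ('a \<times> 'a) measure \<Rightarrow> ennreal" where
  "qot_obj \<epsilon> \<mu> \<nu> \<pi> = (\<integral>\<^sup>+ z. ennreal (qcost z) \<partial>\<pi>)
      + ennreal (\<epsilon> / 2) * (\<integral>\<^sup>+ z. (RN_deriv (\<mu> \<Otimes>\<^sub>M \<nu>) \<pi> z)^2 \<partial>(\<mu> \<Otimes>\<^sub>M \<nu>))"

definition QOT :: "real \<Rightarrow> 'a::euclidean_space measure \<Rightarrow> 'a measure \<Rightarrow> ennreal" where
  "QOT \<epsilon> \<mu> \<nu> = (INF \<pi>\<in>{\<pi>\<in>couplings \<mu> \<nu>. absolutely_continuous (\<mu> \<Otimes>\<^sub>M \<nu>) \<pi>}.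
      qot_obj \<epsilon> \<mu> \<nu> \<pi>)"

definition is_QOT_optimizer :: "real \<Rightarrow> 'a::euclidean_space measure \<Rightarrow> 'a measure \<Rightarrow> ('a \<times> 'a) measure \<Rightarrow> bool" where
  "is_QOT_optimizer \<epsilon> \<mu> \<nu> \<pi> \<longleftrightarrow> \<pi> \<in> couplings \<mu> \<nu> \<and>
      absolutely_continuous (\<mu> \<Otimes>\<^sub>M \<nu>) \<pi> \<and> qot_obj \<epsilon> \<mu> \<nu> \<pi> = QOT \<epsilon> \<mu> \<nu>"

text \<open>Delta_eps = QOT_eps - OT (both finite in the situation considered).\<close>
definition QOT_gap :: "real \<Rightarrow> 'a::euclidean_space measure \<Rightarrow> 'a measure \<Rightarrow> real" where
  "QOT_gap \<epsilon> \<mu> \<nu> = enn2real (QOT \<epsilon> \<mu> \<nu>) - enn2real (OT \<mu> \<nu>)"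

definition spt :: "'a::metric_space measure \<Rightarrow> 'a set" where
  "spt M = {z. \<forall>e>0. emeasure M (ball z e) \<noteq> 0}"

definition set_dist :: "'a::metric_space set \<Rightarrow> 'a set \<Rightarrow> ereal" where
  "set_dist A B = (SUP a\<in>A. ereal (infdist a B))"

definition lipschitz_domain :: "'a::euclidean_space set \<Rightarrow> bool" where
  "lipschitz_domain \<Omega> \<longleftrightarrow> open \<Omega> \<and>
     (\<forall>p\<in>frontier \<Omega>. \<exists>r>0. \<exists>e::'a. \<exists>h::'a \<Rightarrow> real. \<exists>M.
        norm e = 1 \<and> M-lipschitz_on {v. v \<bullet> e = 0} h \<and>
        \<Omega> \<inter> ball p r = {x\<in>ball p r. x \<bullet> e < h (x - (x \<bullet> e) *\<^sub>R e)})"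

end

theory Submission
  imports Defs
begin

text \<open>If spt pi_eps lies in the tube {(x, y). |y - T x| < r} around the graph of T, then
  pi_eps gives the tube full mass, while by Fubini and the density bound on nu its P-measure is at
  most lam_nu omega_d r^d. By Cauchy-Schwarz the density p = d pi_eps / dP then satisfies
  |p|^2_{L^2(P)} >= 1 / P(tube), hence Delta_eps >= (eps/2) |p|^2 >= eps / (2 lam_nu omega_d r^d).
  Comparing with Delta_eps <= C_val eps^(2/(d+2)) yields r >= (2 lam_nu omega_d C_val)^(-1/d)
  eps^(1/(d+2)). A point at distance less than delta from gr T satisfies |y - T x| < sqrt(1 + L^2)
  delta because T is L-Lipschitz, which accounts for the factor (1 + L^2)^(d/2).\<close>

lemma compl_spt_eq_Union_null_balls:
  fixes M :: "'a::metric_space measure"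
  assumes "sets M = sets borel"
  shows "- spt M = \<Union>{ball z e | z e. 0 < e \<and> emeasure M (ball z e) = 0}"
proof
  show "- spt M \<subseteq> \<Union>{ball z e | z e. 0 < e \<and> emeasure M (ball z e) = 0}"
    unfolding spt_def by auto (metis centre_in_ball)
next
  show "\<Union>{ball z e | z e. 0 < e \<and> emeasure M (ball z e) = 0} \<subseteq> - spt M"
  proof clarify
    fix w z e assume e: "0 < e" "emeasure M (ball z e) = 0" "w \<in> ball z e" "w \<in> spt M"
    have "ball w (e - dist z w) \<subseteq> ball z e"
    proof
      fix x assume "x \<in> ball w (e - dist z w)"
      then show "x \<in> ball z e" using dist_triangle[of z x w] by (simp add: dist_commute)
    qed
    then have "emeasure M (ball w (e - dist z w)) = 0"
      using e(2) emeasure_mono[of "ball w (e - dist z w)" "ball z e" M] assms by simp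
    with e show False unfolding spt_def by simp
  qed
qed

lemma closed_spt:
  fixes M :: "'a::metric_space measure"
  assumes "sets M = sets borel"
  shows "closed (spt M)"
  using compl_spt_eq_Union_null_balls[OF assms] by (auto simp: closed_def)

lemma compl_spt_null_sets:
  fixes M :: "'a::{metric_space,second_countable_topology} measure"
  assumes "sets M = sets borel"
  shows "- spt M \<in> null_sets M"
proof -
  let ?F = "{ball z e | z e. 0 < e \<and> emeasure M (ball z e) = 0}"
  obtain F where F: "F \<subseteq> ?F" "countable F" "\<Union>F = \<Union>?F"
    by (rule Lindelof[of ?F]) auto
  have "(\<Union>B\<in>F. B) \<in> null_sets M"
  proof (rule null_sets_UN'[OF F(2)])
    fix B assume "B \<in> F"
    with F(1) show "B \<in> null_sets M" by (auto simp: null_sets_def assms)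
  qed
  then show ?thesis using F(3) compl_spt_eq_Union_null_balls[OF assms] by simp
qed

lemma AE_in_spt:
  fixes M :: "'a::{metric_space,second_countable_topology} measure"
  assumes "sets M = sets borel"
  shows "AE x in M. x \<in> spt M"
  using AE_not_in[OF compl_spt_null_sets[OF assms]] by simp

lemma emeasure_eq_1_if_spt_subset:
  fixes M :: "'a::{metric_space,second_countable_topology} measure"
  assumes "prob_space M" "sets M = sets borel" "S \<in> sets borel" "spt M \<subseteq> S"
  shows "emeasure M S = 1"
proof (rule prob_space.emeasure_eq_1_AE[OF assms(1)])
  show "S \<in> sets M" using assms(2,3) by simp
  show "AE x in M. x \<in> S" using AE_in_spt[OF assms(2)] assms(4) by auto
qed

lemma emeasure_le_mult_lborel_if_RN_deriv_le:
  fixes \<nu> :: "'a::euclidean_space measure"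
  assumes sets_\<nu>: "sets \<nu> = sets borel" and ac: "absolutely_continuous lborel \<nu>"
    and bound: "AE y in lborel. y \<in> spt \<nu> \<longrightarrow> RN_deriv lborel \<nu> y \<le> ennreal lam"
    and B: "B \<in> sets borel"
  shows "emeasure \<nu> B \<le> ennreal lam * emeasure lborel B"
proof -
  have spt_borel: "spt \<nu> \<in> sets borel" using closed_spt[OF sets_\<nu>] by simp
  have dens: "density lborel (RN_deriv lborel \<nu>) = \<nu>"
    using ac sets_\<nu> by (intro sigma_finite_measure.density_RN_deriv[OF sigma_finite_lborel]) auto
  have "emeasure \<nu> B = emeasure \<nu> (B - (- spt \<nu>))"
    by (rule emeasure_Diff_null_set[symmetric]) (use compl_spt_null_sets[OF sets_\<nu>] B sets_\<nu> in auto)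
  also have "\<dots> = (\<integral>\<^sup>+ y. RN_deriv lborel \<nu> y * indicator (B \<inter> spt \<nu>) y \<partial>lborel)"
    by (subst dens[symmetric], subst emeasure_density) (use B spt_borel in \<open>auto simp: Diff_eq\<close>)
  also have "\<dots> \<le> (\<integral>\<^sup>+ y. ennreal lam * indicator B y \<partial>lborel)"
    by (intro nn_integral_mono_AE, use bound in eventually_elim) (auto simp: indicator_def)
  also have "\<dots> = ennreal lam * emeasure lborel B"
    using B by (intro nn_integral_cmult_indicator) auto
  finally show ?thesis .
qed

lemma sets_pair_measure_borel:
  fixes \<mu> :: "'a::second_countable_topology measure" and \<nu> :: "'b::second_countable_topology measure"
  assumes "sets \<mu> = sets borel" "sets \<nu> = sets borel"
  shows "sets (\<mu> \<Otimes>\<^sub>M \<nu>) = sets borel"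
  using sets_pair_measure_cong[OF assms] by (metis borel_prod)

lemma pos_if_emeasure_le_mult_lborel:
  fixes \<nu> :: "'a::euclidean_space measure"
  assumes "prob_space \<nu>" "sets \<nu> = sets borel"
    and "\<And>B. B \<in> sets borel \<Longrightarrow> emeasure \<nu> B \<le> ennreal lam * emeasure lborel B"
  shows "0 < lam"
  using assms(3)[of UNIV] prob_space.emeasure_space_1[OF assms(1)] assms(2)
  by (cases "0 < lam") (auto simp: ennreal_neg sets_eq_imp_space_eq)

definition graph_tube :: "('a \<Rightarrow> 'b::real_normed_vector) \<Rightarrow> real \<Rightarrow> ('a \<times> 'b) set" where
  "graph_tube T r = {z. norm (snd z - T (fst z)) < r}"

lemma open_graph_tube:
  fixes T :: "'a::topological_space \<Rightarrow> 'b::real_normed_vector"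
  assumes "continuous_on UNIV T"
  shows "open (graph_tube T r)"
  unfolding graph_tube_def
  by (intro open_Collect_less continuous_intros continuous_on_compose2[OF assms]) auto

lemma emeasure_pair_graph_tube_le:
  fixes \<mu> \<nu> :: "'a::euclidean_space measure"
  assumes "prob_space \<mu>" "prob_space \<nu>" "sets \<mu> = sets borel" "sets \<nu> = sets borel"
    and \<nu>_bound: "\<And>B. B \<in> sets borel \<Longrightarrow> emeasure \<nu> B \<le> ennreal lam * emeasure lborel B"
    and T: "continuous_on UNIV T" and r: "0 \<le> r"
  shows "emeasure (\<mu> \<Otimes>\<^sub>M \<nu>) (graph_tube T r)
           \<le> ennreal (lam * r ^ DIM('a) * measure lborel (ball (0::'a) 1))"
proof -
  interpret \<mu>: prob_space \<mu> by fact
  interpret \<nu>: prob_space \<nu> by fact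
  have "graph_tube T r \<in> sets (\<mu> \<Otimes>\<^sub>M \<nu>)"
    using open_graph_tube[OF T] sets_pair_measure_borel[OF assms(3,4)] by simp
  then have "emeasure (\<mu> \<Otimes>\<^sub>M \<nu>) (graph_tube T r) = (\<integral>\<^sup>+ x. emeasure \<nu> (Pair x -` graph_tube T r) \<partial>\<mu>)"
    by (rule \<nu>.emeasure_pair_measure_alt)
  also have "\<dots> \<le> (\<integral>\<^sup>+ x. ennreal lam * ennreal (r ^ DIM('a) * measure lborel (ball (0::'a) 1)) \<partial>\<mu>)"
  proof (intro nn_integral_mono)
    fix x
    have "Pair x -` graph_tube T r = ball (T x) r"
      by (auto simp: graph_tube_def dist_norm norm_minus_commute)
    moreover have "emeasure lborel (ball (T x) r) = ennreal (measure lborel (ball (T x) r))"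
      using emeasure_lborel_ball_finite[of "T x" r] by (intro emeasure_eq_ennreal_measure) simp
    moreover have "measure lborel (ball (T x) r) = r ^ DIM('a) * measure lborel (ball (0::'a) 1)"
      using r by (rule content_ball_conv_unit_ball)
    ultimately show "emeasure \<nu> (Pair x -` graph_tube T r)
        \<le> ennreal lam * ennreal (r ^ DIM('a) * measure lborel (ball (0::'a) 1))"
      using \<nu>_bound[of "ball (T x) r"] by simp
  qed
  also have "\<dots> = ennreal (lam * (r ^ DIM('a) * measure lborel (ball (0::'a) 1)))"
    using \<mu>.emeasure_space_1 r by (simp add: ennreal_mult'')
  finally show ?thesis by (simp add: mult.assoc)
qed

lemma ennreal_two_mult_le_squares:
  fixes a b :: ennreal
  shows "2 * a * b \<le> a\<^sup>2 + b\<^sup>2"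
proof (cases "a = \<infinity> \<or> b = \<infinity>")
  case True
  then show ?thesis by (auto simp: power2_eq_square)
next
  case False
  then obtain x y where "a = ennreal x" "b = ennreal y" "0 \<le> x" "0 \<le> y"
    by (cases a rule: ennreal_cases; cases b rule: ennreal_cases) auto
  moreover have "ennreal (2 * x * y) \<le> ennreal (x\<^sup>2 + y\<^sup>2)"
    by (rule ennreal_leI) (rule sum_squares_bound)
  moreover have "ennreal (2 * x * y) = 2 * ennreal x * ennreal y"
    using \<open>0 \<le> x\<close> \<open>0 \<le> y\<close> by (simp add: ennreal_mult)
  moreover have "ennreal (x\<^sup>2 + y\<^sup>2) = (ennreal x)\<^sup>2 + (ennreal y)\<^sup>2"
    using \<open>0 \<le> x\<close> \<open>0 \<le> y\<close> by (simp add: ennreal_plus ennreal_power)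
  ultimately show ?thesis by simp
qed

lemma inverse_emeasure_le_nn_integral_square:
  assumes p: "p \<in> borel_measurable M" and S: "S \<in> sets M"
    and mass: "(\<integral>\<^sup>+ z. p z * indicator S z \<partial>M) = 1"
  shows "inverse (emeasure M S) \<le> (\<integral>\<^sup>+ z. (p z)\<^sup>2 \<partial>M)"
proof (cases "emeasure M S = \<infinity>")
  case False
  \<comment> \<open>Cauchy-Schwarz, obtained by integrating 2 t p \<le> p^2 + t^2 over S with t = 1 / M S\<close>
  define t where "t = inverse (emeasure M S)"
  have "emeasure M S \<noteq> 0"
    using mass nn_integral_null_set[of S M p] S by (auto simp: null_sets_def mult.commute)
  then have "t * emeasure M S = 1"
    using False ennreal_divide_self[of "emeasure M S"]
    by (simp add: t_def divide_ennreal_def mult.commute top.not_eq_extremum)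
  then have t_mass: "t\<^sup>2 * emeasure M S = t"
    by (simp add: power2_eq_square mult.assoc)
  have t_finite: "t \<noteq> \<infinity>"
    using \<open>emeasure M S \<noteq> 0\<close> by (simp add: t_def)
  have "t + t = 2 * t * (\<integral>\<^sup>+ z. p z * indicator S z \<partial>M)"
    using mass by (simp add: mult_2)
  also have "\<dots> = (\<integral>\<^sup>+ z. 2 * t * (p z * indicator S z) \<partial>M)"
    by (rule nn_integral_cmult[symmetric]) (use p S in simp)
  also have "\<dots> \<le> (\<integral>\<^sup>+ z. (p z)\<^sup>2 * indicator S z + t\<^sup>2 * indicator S z \<partial>M)"
  proof (intro nn_integral_mono)
    fix z
    have "2 * t * p z \<le> (p z)\<^sup>2 + t\<^sup>2"
      using ennreal_two_mult_le_squares[of t "p z"] by (simp add: add.commute)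
    then show "2 * t * (p z * indicator S z) \<le> (p z)\<^sup>2 * indicator S z + t\<^sup>2 * indicator S z"
      by (simp add: indicator_def)
  qed
  also have "\<dots> = (\<integral>\<^sup>+ z. (p z)\<^sup>2 * indicator S z \<partial>M) + t"
    using p S t_mass by (simp add: nn_integral_add nn_integral_cmult_indicator)
  finally have "t \<le> (\<integral>\<^sup>+ z. (p z)\<^sup>2 * indicator S z \<partial>M)"
    using t_finite by (simp add: add.commute ennreal_add_left_cancel_le)
  also have "\<dots> \<le> (\<integral>\<^sup>+ z. (p z)\<^sup>2 \<partial>M)"
    by (intro nn_integral_mono) (auto simp: indicator_def)
  finally show ?thesis unfolding t_def .
qed simp

lemma QOT_optimizer_ge_OT_plus_inverse_measure:
  fixes \<mu> \<nu> :: "'a::euclidean_space measure"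
  assumes prob: "prob_space \<mu>" "prob_space \<nu>" and sets: "sets \<mu> = sets borel" "sets \<nu> = sets borel"
    and opt: "is_QOT_optimizer \<epsilon> \<mu> \<nu> \<pi>" and S: "S \<in> sets borel" "spt \<pi> \<subseteq> S"
  shows "OT \<mu> \<nu> + ennreal (\<epsilon> / 2) * inverse (emeasure (\<mu> \<Otimes>\<^sub>M \<nu>) S) \<le> QOT \<epsilon> \<mu> \<nu>"
proof -
  let ?P = "\<mu> \<Otimes>\<^sub>M \<nu>"
  define p where "p = RN_deriv ?P \<pi>"
  interpret P: prob_space ?P using prob by (rule prob_space_pair)
  have sets_P: "sets ?P = sets borel" using sets by (rule sets_pair_measure_borel)
  have coupling: "\<pi> \<in> couplings \<mu> \<nu>" and ac: "absolutely_continuous ?P \<pi>"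
    and objective: "QOT \<epsilon> \<mu> \<nu>
      = (\<integral>\<^sup>+ z. ennreal (qcost z) \<partial>\<pi>) + ennreal (\<epsilon> / 2) * (\<integral>\<^sup>+ z. (p z)\<^sup>2 \<partial>?P)"
    using opt by (auto simp: is_QOT_optimizer_def qot_obj_def p_def)
  have sets_\<pi>: "sets \<pi> = sets borel" and "prob_space \<pi>"
    using coupling sets_P by (auto simp: couplings_def)
  have "density ?P p = \<pi>"
    unfolding p_def using ac sets_\<pi> sets_P by (intro P.density_RN_deriv) auto
  then have "emeasure \<pi> S = (\<integral>\<^sup>+ z. p z * indicator S z \<partial>?P)"
    using S(1) sets_P by (metis emeasure_density borel_measurable_RN_deriv p_def)
  moreover have "emeasure \<pi> S = 1"
    using \<open>prob_space \<pi>\<close> sets_\<pi> S by (rule emeasure_eq_1_if_spt_subset)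
  ultimately have "inverse (emeasure ?P S) \<le> (\<integral>\<^sup>+ z. (p z)\<^sup>2 \<partial>?P)"
    using S(1) sets_P by (intro inverse_emeasure_le_nn_integral_square) (simp_all add: p_def)
  moreover have "OT \<mu> \<nu> \<le> (\<integral>\<^sup>+ z. ennreal (qcost z) \<partial>\<pi>)"
    unfolding OT_def using coupling by (rule INF_lower)
  ultimately show ?thesis
    unfolding objective by (intro add_mono mult_left_mono) auto
qed

lemma QOT_gap_mult_measure_ge:
  fixes \<mu> \<nu> :: "'a::euclidean_space measure"
  assumes prob: "prob_space \<mu>" "prob_space \<nu>" and sets: "sets \<mu> = sets borel" "sets \<nu> = sets borel"
    and opt: "is_QOT_optimizer \<epsilon> \<mu> \<nu> \<pi>" and \<epsilon>: "0 < \<epsilon>" and finite: "QOT \<epsilon> \<mu> \<nu> \<noteq> \<infinity>"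
    and S: "S \<in> sets borel" "spt \<pi> \<subseteq> S"
  shows "\<epsilon> / 2 \<le> QOT_gap \<epsilon> \<mu> \<nu> * measure (\<mu> \<Otimes>\<^sub>M \<nu>) S"
proof -
  define m where "m = measure (\<mu> \<Otimes>\<^sub>M \<nu>) S"
  interpret P: prob_space "\<mu> \<Otimes>\<^sub>M \<nu>" using prob by (rule prob_space_pair)
  have lower: "OT \<mu> \<nu> + ennreal (\<epsilon> / 2) * inverse (ennreal m) \<le> QOT \<epsilon> \<mu> \<nu>"
    using QOT_optimizer_ge_OT_plus_inverse_measure[OF prob sets opt S]
    by (simp add: m_def P.emeasure_eq_measure)
  have "m \<noteq> 0"
  proof
    assume "m = 0"
    then have "QOT \<epsilon> \<mu> \<nu> = \<infinity>" using lower \<epsilon> by (simp add: ennreal_mult_top top_unique)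
    with finite show False ..
  qed
  then have "0 < m" by (simp add: m_def order_le_neq_trans)
  then have "ennreal (\<epsilon> / 2) * inverse (ennreal m) = ennreal (\<epsilon> / 2 * inverse m)"
    using \<epsilon> by (simp add: inverse_ennreal flip: ennreal_mult)
  also have "\<epsilon> / 2 * inverse m = \<epsilon> / (2 * m)"
    by (simp add: field_simps)
  finally have inverse_m: "ennreal (\<epsilon> / 2) * inverse (ennreal m) = ennreal (\<epsilon> / (2 * m))" .
  have "OT \<mu> \<nu> \<noteq> \<infinity>"
  proof
    assume "OT \<mu> \<nu> = \<infinity>"
    with lower finite show False by (simp add: top_unique)
  qed
  then have "ennreal (enn2real (OT \<mu> \<nu>) + \<epsilon> / (2 * m)) \<le> ennreal (enn2real (QOT \<epsilon> \<mu> \<nu>))"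
    using lower finite \<epsilon> \<open>0 < m\<close> by (simp add: inverse_m ennreal_plus less_top)
  then have "\<epsilon> / (2 * m) \<le> QOT_gap \<epsilon> \<mu> \<nu>"
    by (simp add: QOT_gap_def ennreal_le_iff)
  then show ?thesis
    using \<open>0 < m\<close> by (simp add: m_def field_simps)
qed

lemma powr_neg_inverse_mult_le_if_power_le:
  fixes K x r :: real
  assumes K: "0 < K" and x: "0 \<le> x" and r: "0 \<le> r" and n: "0 < n"
    and le: "x ^ n \<le> K * r ^ n"
  shows "K powr (- 1 / real n) * x \<le> r"
proof -
  have "(K powr (1 / real n)) ^ n = K"
    using K n by (simp add: powr_power)
  with le have "x ^ n \<le> (K powr (1 / real n) * r) ^ n"
    by (simp add: power_mult_distrib)
  then have "x \<le> K powr (1 / real n) * r"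
    using x r n by (simp add: power_mono_iff)
  then have "K powr (- 1 / real n) * x \<le> K powr (- 1 / real n) * (K powr (1 / real n) * r)"
    by (rule mult_left_mono) simp
  also have "\<dots> = r"
    using K by (simp add: powr_add[symmetric])
  finally show ?thesis .
qed

lemma powr_root_le_if_le_mult_power:
  fixes \<epsilon> K r :: real
  assumes \<epsilon>: "0 < \<epsilon>" and r: "0 < r" and n: "0 < n"
    and le: "\<epsilon> \<le> K * r ^ n * \<epsilon> powr (2 / (2 + real n))"
  shows "K powr (- 1 / real n) * \<epsilon> powr (1 / (real n + 2)) \<le> r"
proof -
  define a where "a = \<epsilon> powr (1 / (real n + 2))"
  have "a ^ n * a\<^sup>2 = \<epsilon> powr (real n / (real n + 2) + 2 / (real n + 2))"
    using \<epsilon> by (simp add: a_def powr_power powr_add[symmetric])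
  also have "real n / (real n + 2) + 2 / (real n + 2) = 1"
    by (simp add: add_divide_distrib[symmetric])
  finally have "a ^ n * a\<^sup>2 \<le> (K * r ^ n) * a\<^sup>2"
    using \<epsilon> le by (simp add: a_def powr_power add.commute)
  moreover have "0 < a" using \<epsilon> by (simp add: a_def)
  ultimately have "a ^ n \<le> K * r ^ n" by simp
  moreover have "0 < K * r ^ n"
    using calculation \<open>0 < a\<close> by (meson order_less_le_trans zero_less_power)
  then have "0 < K" using r by (simp add: zero_less_mult_iff)
  ultimately show ?thesis
    using powr_neg_inverse_mult_le_if_power_le[of K a r n] \<open>0 < a\<close> r n by (simp add: a_def)
qed

lemma ereal_le_SUP_if_strict_bounds:
  assumes "\<And>r. (\<And>z. z \<in> A \<Longrightarrow> f z < r) \<Longrightarrow> b \<le> r"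
  shows "ereal b \<le> (SUP z\<in>A. ereal (f z))"
proof (rule ccontr)
  assume "\<not> ?thesis"
  then obtain r where r: "(SUP z\<in>A. ereal (f z)) < ereal r" "ereal r < ereal b"
    using ereal_dense2 by (metis not_le)
  have "f z < r" if "z \<in> A" for z
    using order.strict_trans1[OF SUP_upper[OF that] r(1)] by simp
  then show False using assms r(2) by fastforce
qed

lemma lipschitz_norm_diff_lt_infdist_graph:
  fixes T :: "'a::real_normed_vector \<Rightarrow> 'b::real_normed_vector"
  assumes lip: "L-lipschitz_on UNIV T" and close: "infdist (x, y) (range (\<lambda>x. (x, T x))) < \<delta>"
  shows "norm (y - T x) < sqrt (1 + L\<^sup>2) * \<delta>"
proof -
  obtain x' where "dist (x, y) (x', T x') < \<delta>"
    using close by (auto simp: infdist_notempty cINF_less_iff)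
  moreover define a b where "a = dist y (T x')" and "b = dist x x'"
  ultimately have ab: "sqrt (a\<^sup>2 + b\<^sup>2) < \<delta>"
    by (simp add: dist_Pair_Pair add.commute)
  have L: "0 \<le> L" and T: "dist (T x') (T x) \<le> L * b"
    using lip by (auto simp: lipschitz_on_def dist_commute b_def)
  have "norm (y - T x) \<le> a + L * b"
    using dist_triangle[of y "T x" "T x'"] T by (simp add: dist_norm a_def)
  also have "\<dots> \<le> sqrt ((1 + L\<^sup>2) * (a\<^sup>2 + b\<^sup>2))"
    \<comment> \<open>Cauchy-Schwarz for the vectors (1, L) and (a, b)\<close>
    using sum_squares_bound[of "L * a" b]
    by (intro real_le_rsqrt) (simp add: power2_eq_square algebra_simps)
  also have "\<dots> = sqrt (1 + L\<^sup>2) * sqrt (a\<^sup>2 + b\<^sup>2)"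
    by (rule real_sqrt_mult)
  also have "\<dots> < sqrt (1 + L\<^sup>2) * \<delta>"
    using ab by (intro mult_strict_left_mono) (auto intro: add_pos_nonneg)
  finally show ?thesis .
qed

lemma QOT_optimizer_graph_tube_radius_ge:
  fixes \<mu> \<nu> :: "'a::euclidean_space measure"
  assumes prob: "prob_space \<mu>" "prob_space \<nu>" and sets: "sets \<mu> = sets borel" "sets \<nu> = sets borel"
    and \<nu>_bound: "\<And>B. B \<in> sets borel \<Longrightarrow> emeasure \<nu> B \<le> ennreal lam * emeasure lborel B"
    and T: "continuous_on UNIV T"
    and opt: "is_QOT_optimizer \<epsilon> \<mu> \<nu> \<pi>" and \<epsilon>: "0 < \<epsilon>"
    and gap: "0 < QOT_gap \<epsilon> \<mu> \<nu>" "QOT_gap \<epsilon> \<mu> \<nu> \<le> C * \<epsilon> powr (2 / (2 + real DIM('a)))"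
    and tube: "spt \<pi> \<subseteq> graph_tube T r"
  shows "(2 * lam * measure lborel (ball (0::'a) 1) * C) powr (- 1 / real DIM('a))
           * \<epsilon> powr (1 / (real DIM('a) + 2)) \<le> r"
proof -
  let ?d = "DIM('a)"
  let ?\<omega> = "measure lborel (ball (0::'a) 1)"
  define m where "m = measure (\<mu> \<Otimes>\<^sub>M \<nu>) (graph_tube T r)"
  interpret P: prob_space "\<mu> \<Otimes>\<^sub>M \<nu>" using prob by (rule prob_space_pair)
  have "QOT \<epsilon> \<mu> \<nu> \<noteq> \<infinity>"
    using gap(1) enn2real_nonneg[of "OT \<mu> \<nu>"] unfolding QOT_gap_def by fastforce
  then have mass: "\<epsilon> / 2 \<le> QOT_gap \<epsilon> \<mu> \<nu> * m"
    using open_graph_tube[OF T] tube unfolding m_def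
    by (intro QOT_gap_mult_measure_ge[OF prob sets opt \<epsilon>]) auto
  then have "0 < QOT_gap \<epsilon> \<mu> \<nu> * m" using \<epsilon> by linarith
  then have "0 < m" using gap(1) by (rule zero_less_mult_pos)
  then have "graph_tube T r \<noteq> {}" by (auto simp: m_def)
  then have "0 < r" by (auto simp: graph_tube_def intro: le_less_trans[OF norm_ge_zero])
  then have "ennreal m \<le> ennreal (lam * r ^ ?d * ?\<omega>)"
    using emeasure_pair_graph_tube_le[OF prob sets \<nu>_bound T]
    by (simp add: m_def P.emeasure_eq_measure)
  then have "m \<le> lam * r ^ ?d * ?\<omega>"
    using \<open>0 < m\<close> by (simp add: ennreal_le_iff2)
  then have "QOT_gap \<epsilon> \<mu> \<nu> * m \<le> C * \<epsilon> powr (2 / (2 + real ?d)) * (lam * r ^ ?d * ?\<omega>)"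
    using gap \<open>0 < m\<close> by (intro mult_mono) auto
  then have "\<epsilon> \<le> 2 * (C * \<epsilon> powr (2 / (2 + real ?d)) * (lam * r ^ ?d * ?\<omega>))"
    using mass by linarith
  also have "\<dots> = (2 * lam * ?\<omega> * C) * r ^ ?d * \<epsilon> powr (2 / (2 + real ?d))"
    by (simp only: mult_ac)
  finally show ?thesis
    using \<epsilon> \<open>0 < r\<close> by (intro powr_root_le_if_le_mult_power) simp_all
qed

theorem corollary3p7:
  fixes \<mu> \<nu> :: "'a::euclidean_space measure"
    and \<Omega> :: "'a set" and \<rho> :: "'a \<Rightarrow> real"
    and lam_mu_low lam_mu_up lam_nu L C_val :: real
    and \<phi> :: "'a \<Rightarrow> real" and T :: "'a \<Rightarrow> 'a"
    and \<epsilon> :: real and \<pi> :: "('a \<times> 'a) measure"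
  assumes mu_prob: "prob_space \<mu>" and nu_prob: "prob_space \<nu>"
    and nu_borel: "sets \<nu> = sets borel"
    (* (a) *)
    and Omega_open: "open \<Omega>" and Omega_bounded: "bounded \<Omega>"
    and Omega_conn: "connected \<Omega>" and Omega_lip: "lipschitz_domain \<Omega>"
    and Omega_ball: "\<Omega> \<subseteq> ball 0 1"
    and rho_meas: "\<rho> \<in> borel_measurable borel"
    and mu_dens: "\<mu> = density lborel (\<lambda>x. ennreal (\<rho> x * indicator \<Omega> x))"
    and lam_mu_pos: "0 < lam_mu_low" and lam_mu_le: "lam_mu_low \<le> lam_mu_up"
    and rho_bounds: "AE x in lborel. x \<in> \<Omega> \<longrightarrow> lam_mu_low \<le> \<rho> x \<and> \<rho> x \<le> lam_mu_up"
    (* (b) *)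
    and nu_ac: "absolutely_continuous lborel \<nu>"
    and nu_spt: "spt \<nu> \<subseteq> ball 0 1"
    and nu_dens: "AE y in lborel. y \<in> spt \<nu> \<longrightarrow> RN_deriv lborel \<nu> y \<le> ennreal lam_nu"
    (* (c) Brenier map T = grad phi, phi convex, T_# mu = nu, T L-Lipschitz *)
    and phi_convex: "convex_on UNIV \<phi>"
    and T_grad: "\<And>x. (\<phi> has_derivative (\<lambda>h. T x \<bullet> h)) (at x)"
    and T_push: "distr \<mu> borel T = \<nu>"
    and T_lip: "L-lipschitz_on UNIV T"
    (* constant C_val *)
    and C_pos: "0 < C_val"
    and C_val: "\<And>e. 0 < e \<Longrightarrow> e \<le> 1 \<Longrightarrow>
        inverse C_val * e powr (2 / (2 + real DIM('a))) \<le> QOT_gap e \<mu> \<nu> \<and>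
        QOT_gap e \<mu> \<nu> \<le> C_val * e powr (2 / (2 + real DIM('a)))"
    (* eps and the optimizer pi_eps *)
    and eps: "0 < \<epsilon>" "\<epsilon> \<le> 1"
    and pi_opt: "is_QOT_optimizer \<epsilon> \<mu> \<nu> \<pi>"
  shows "set_dist (spt \<pi>) (range (\<lambda>x. (x, T x)))
           \<ge> ereal ((2 * lam_nu * (1 + L^2) powr (real DIM('a) / 2)
                      * measure lborel (ball (0::'a) 1) * C_val) powr (- 1 / real DIM('a))
                    * \<epsilon> powr (1 / (real DIM('a) + 2)))
       \<and> (SUP z\<in>spt \<pi>. ereal (norm (snd z - T (fst z))))
           \<ge> ereal ((2 * lam_nu * (1 + L^2) powr (real DIM('a) / 2)
                      * measure lborel (ball (0::'a) 1) * C_val) powr (- 1 / real DIM('a))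
                    * \<epsilon> powr (1 / (real DIM('a) + 2)))"
proof -
  let ?d = "DIM('a)"
  define K where "K = 2 * lam_nu * measure lborel (ball (0::'a) 1) * C_val"
  define c where "c = K powr (- 1 / real ?d) * \<epsilon> powr (1 / (real ?d + 2))"
  have sets_\<mu>: "sets \<mu> = sets borel" using mu_dens by simp
  have \<nu>_bound: "\<And>B. B \<in> sets borel \<Longrightarrow> emeasure \<nu> B \<le> ennreal lam_nu * emeasure lborel B"
    using nu_borel nu_ac nu_dens by (rule emeasure_le_mult_lborel_if_RN_deriv_le)
  have gap: "0 < QOT_gap \<epsilon> \<mu> \<nu>" "QOT_gap \<epsilon> \<mu> \<nu> \<le> C_val * \<epsilon> powr (2 / (2 + real ?d))"
    using C_val[OF eps] C_pos eps(1) by (auto intro: less_le_trans[rotated])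
  have radius: "c \<le> r" if "spt \<pi> \<subseteq> graph_tube T r" for r
    using QOT_optimizer_graph_tube_radius_ge[OF mu_prob nu_prob sets_\<mu> nu_borel \<nu>_bound
        lipschitz_on_continuous_on[OF T_lip] pi_opt eps(1) gap that]
    by (simp add: c_def K_def)
  have "0 < K"
    using pos_if_emeasure_le_mult_lborel[OF nu_prob nu_borel \<nu>_bound] C_pos
    by (simp add: K_def content_ball_pos)
  then have c_graph: "(2 * lam_nu * (1 + L\<^sup>2) powr (real ?d / 2) * measure lborel (ball (0::'a) 1) * C_val)
      powr (- 1 / real ?d) * \<epsilon> powr (1 / (real ?d + 2)) = c / sqrt (1 + L\<^sup>2)"
    by (simp add: c_def K_def powr_mult powr_powr powr_minus_divide powr_half_sqrt mult_ac)
  have "c / sqrt (1 + L\<^sup>2) \<le> c"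
    by (rule divide_left_mono[of 1, simplified]) (simp_all add: c_def add_pos_nonneg)
  show ?thesis
    unfolding c_graph set_dist_def
  proof (intro conjI ereal_le_SUP_if_strict_bounds)
    fix \<delta> assume "\<And>z. z \<in> spt \<pi> \<Longrightarrow> infdist z (range (\<lambda>x. (x, T x))) < \<delta>"
    then have "spt \<pi> \<subseteq> graph_tube T (sqrt (1 + L\<^sup>2) * \<delta>)"
      using lipschitz_norm_diff_lt_infdist_graph[OF T_lip] by (force simp: graph_tube_def)
    moreover have "0 < sqrt (1 + L\<^sup>2)" by (simp add: add_pos_nonneg)
    ultimately show "c / sqrt (1 + L\<^sup>2) \<le> \<delta>"
      using radius by (simp add: pos_divide_le_eq mult.commute)
  next
    fix r assume "\<And>z. z \<in> spt \<pi> \<Longrightarrow> norm (snd z - T (fst z)) < r"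
    then have "spt \<pi> \<subseteq> graph_tube T r" by (auto simp: graph_tube_def)
    then show "c / sqrt (1 + L\<^sup>2) \<le> r" using radius \<open>c / sqrt (1 + L\<^sup>2) \<le> c\<close> by fastforce
  qed
qed

end
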